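(* Consider the adoption–opinion model described in the context and suppose Assumption 1 (stated in the context) holds. If $s(0),a(0),d(0)\in[0,1]^n$ and $s(0)+a(0)+d(0)=\mathbf 1$, then $s(t),a(t),d(t)\in[0,1]^n$ and $s(t)+a(t)+d(t)=\mathbf 1$ for all $t\ge 0$. Moreover, if $x(0)\in[0,1]^n$, then $x(t)\in[0,1]^n$ for all $t\ge0$.
   Context: Let $n\ge1$ and $\mathcal V=\{1,\dots,n\}$ (communities). Let $W,\tilde W\in\mathbb R_+^{n\times n}$ be nonnegative matrices (physical and social interaction matrices). For each $i\in\mathcal V$ let $\beta_i,\gamma_i,\theta_i,\delta_i\in[0,1]$ and $\alpha_i,\lambda_i,\xi_i\ge0$ with $\alpha_i+\lambda_i+\xi_i=1$. The adoption–opinion model is the discrete-time system ($t\in\mathbb Z_+$), for all $i\in\mathcal V$: $s_i(t+1)=s_i(t)-\beta_i x_i(t)s_i(t)\sum_{j}W_{ij}a_j(t)+\gamma_i x_i(t)d_i(t)-\theta_i(1-x_i(t))s_i(t)$, $a_i(t+1)=a_i(t)+\beta_i x_i(t)s_i(t)\sum_{j}W_{ij}a_j(t)-\delta_i a_i(t)$, $d_i(t+1)=d_i(t)-\gamma_i x_i(t)d_i(t)+\theta_i(1-x_i(t))s_i(t)+\delta_i a_i(t)$, $x_i(t+1)=\alpha_i x_i(0)+\lambda_i\sum_j\tilde W_{ij}x_j(t)+\xi_i\sum_jW_{ij}a_j(t)$. Here $s_i,a_i,d_i$ are the fractions of susceptible, adopter and dissatisfied individuals in community $i$ and $x_i$ its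 opinion. Assumption 1: $W$ and $\tilde W$ are both row-stochastic and irreducible, and $\gamma_i+\theta_i\in(0,1)$ for all $i\in\mathcal V$. $\mathbf 1$ denotes the all-ones vector. *)

theory Defs
  imports Complex_Main
begin

definition row_stochastic :: "('n::finite \<Rightarrow> 'n \<Rightarrow> real) \<Rightarrow> bool" where
  "row_stochastic M \<longleftrightarrow> (\<forall>i j. M i j \<ge> 0) \<and> (\<forall>i. (\<Sum>j\<in>UNIV. M i j) = 1)"

definition irreducible_mat :: "('n::finite \<Rightarrow> 'n \<Rightarrow> real) \<Rightarrow> bool" where
  "irreducible_mat M \<longleftrightarrow> (\<forall>i j. (i, j) \<in> {(k, l). M k l > 0}\<^sup>+)"

end

theory Submission
  imports Defs
begin

text \<open>Each update moves mass between the compartments \<open>s, a, d\<close> of a community, so the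
  total is conserved; every outflow is a \<open>[0,1]\<close>-fraction of the compartment it leaves,
  so no compartment becomes negative, and nonnegative parts of a unit total lie in \<open>[0,1]\<close>.
  The opinion update is a convex combination of \<open>x(0)\<close> and of averages of \<open>x(t)\<close> and
  \<open>a(t)\<close> under row-stochastic weights, so it stays in \<open>[0,1]\<close>.\<close>

lemma row_stochastic_average_bounds:
  fixes M :: "'n::finite \<Rightarrow> 'n \<Rightarrow> real"
  assumes "row_stochastic M" and "\<And>j. v j \<in> {l..u}"
  shows "(\<Sum>j\<in>UNIV. M i j * v j) \<in> {l..u}"
proof -
  have nonneg: "\<And>j. M i j \<ge> 0" and row_sum: "(\<Sum>j\<in>UNIV. M i j) = 1"
    using assms(1) unfolding row_stochastic_def by auto
  have "l = (\<Sum>j\<in>UNIV. M i j * l)"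
    by (simp add: row_sum flip: sum_distrib_right)
  also have "\<dots> \<le> (\<Sum>j\<in>UNIV. M i j * v j)"
    using nonneg assms(2) by (intro sum_mono mult_left_mono) auto
  finally have lower: "l \<le> (\<Sum>j\<in>UNIV. M i j * v j)" .
  have "(\<Sum>j\<in>UNIV. M i j * v j) \<le> (\<Sum>j\<in>UNIV. M i j * u)"
    using nonneg assms(2) by (intro sum_mono mult_left_mono) auto
  also have "\<dots> = u"
    by (simp add: row_sum flip: sum_distrib_right)
  finally show ?thesis using lower by simp
qed

lemma convex_combination3_bounds:
  fixes \<alpha> lam \<xi> p q r :: real
  assumes "\<alpha> \<ge> 0" "lam \<ge> 0" "\<xi> \<ge> 0" "\<alpha> + lam + \<xi> = 1"
    and "p \<in> {l..u}" "q \<in> {l..u}" "r \<in> {l..u}"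
  shows "\<alpha> * p + lam * q + \<xi> * r \<in> {l..u}"
proof -
  have "\<alpha> * l \<le> \<alpha> * p" "lam * l \<le> lam * q" "\<xi> * l \<le> \<xi> * r"
    and "\<alpha> * p \<le> \<alpha> * u" "lam * q \<le> lam * u" "\<xi> * r \<le> \<xi> * u"
    using assms by (auto intro: mult_left_mono)
  moreover have "\<alpha> * l + lam * l + \<xi> * l = l" "\<alpha> * u + lam * u + \<xi> * u = u"
    using assms(4) by (simp_all flip: distrib_right)
  ultimately show ?thesis by auto
qed

lemma adoption_step_nonneg:
  fixes \<beta> \<gamma> \<theta> \<delta> x w s a d :: real
  assumes "\<beta> \<in> {0..1}" "\<gamma> \<in> {0..1}" "\<theta> \<in> {0..1}" "\<delta> \<in> {0..1}"
    and "x \<in> {0..1}" "w \<in> {0..1}" and "s \<ge> 0" "a \<ge> 0" "d \<ge> 0"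
  shows "s - \<beta> * x * s * w + \<gamma> * x * d - \<theta> * (1 - x) * s \<ge> 0"
    and "a + \<beta> * x * s * w - \<delta> * a \<ge> 0"
    and "d - \<gamma> * x * d + \<theta> * (1 - x) * s + \<delta> * a \<ge> 0"
proof -
  have "\<beta> * w * x \<le> x" "\<theta> * (1 - x) \<le> 1 - x"
    using assms by (auto intro!: mult_left_le_one_le mult_le_one)
  then have "0 \<le> (1 - \<beta> * w * x - \<theta> * (1 - x)) * s + \<gamma> * x * d"
    using assms by simp
  then show "s - \<beta> * x * s * w + \<gamma> * x * d - \<theta> * (1 - x) * s \<ge> 0"
    by (simp add: algebra_simps)
  have "0 \<le> (1 - \<delta>) * a + \<beta> * x * s * w"
    using assms by simp
  then show "a + \<beta> * x * s * w - \<delta> * a \<ge> 0"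
    by (simp add: algebra_simps)
  have "\<gamma> * x \<le> 1"
    using assms by (auto intro: mult_le_one)
  then have "0 \<le> (1 - \<gamma> * x) * d + \<theta> * (1 - x) * s + \<delta> * a"
    using assms by simp
  then show "d - \<gamma> * x * d + \<theta> * (1 - x) * s + \<delta> * a \<ge> 0"
    by (simp add: algebra_simps)
qed

theorem proposition1:
  fixes W Wt :: "'n::finite \<Rightarrow> 'n \<Rightarrow> real"
    and \<beta> \<gamma> \<theta> \<delta> \<alpha> lam \<xi> :: "'n \<Rightarrow> real"
    and s a d x :: "nat \<Rightarrow> 'n \<Rightarrow> real"
  assumes W_stoch: "row_stochastic W" and W_irr: "irreducible_mat W"
    and Wt_stoch: "row_stochastic Wt" and Wt_irr: "irreducible_mat Wt"
    and params01: "\<And>i. \<beta> i \<in> {0..1} \<and> \<gamma> i \<in> {0..1} \<and> \<theta> i \<in> {0..1} \<and> \<delta> i \<in> {0..1}"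
    and weights: "\<And>i. \<alpha> i \<ge> 0 \<and> lam i \<ge> 0 \<and> \<xi> i \<ge> 0 \<and> \<alpha> i + lam i + \<xi> i = 1"
    and gt: "\<And>i. \<gamma> i + \<theta> i \<in> {0<..<1}"
    and s_step: "\<And>t i. s (Suc t) i = s t i - \<beta> i * x t i * s t i * (\<Sum>j\<in>UNIV. W i j * a t j)
                         + \<gamma> i * x t i * d t i - \<theta> i * (1 - x t i) * s t i"
    and a_step: "\<And>t i. a (Suc t) i = a t i + \<beta> i * x t i * s t i * (\<Sum>j\<in>UNIV. W i j * a t j)
                         - \<delta> i * a t i"
    and d_step: "\<And>t i. d (Suc t) i = d t i - \<gamma> i * x t i * d t i
                         + \<theta> i * (1 - x t i) * s t i + \<delta> i * a t i"
    and x_step: "\<And>t i. x (Suc t) i = \<alpha> i * x 0 i + lam i * (\<Sum>j\<in>UNIV. Wt i j * x t j)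
                         + \<xi> i * (\<Sum>j\<in>UNIV. W i j * a t j)"
    and init_sad: "\<And>i. s 0 i \<in> {0..1} \<and> a 0 i \<in> {0..1} \<and> d 0 i \<in> {0..1}"
    and init_sum: "\<And>i. s 0 i + a 0 i + d 0 i = 1"
    and init_x: "\<And>i. x 0 i \<in> {0..1}"
  shows "(\<forall>t i. s t i \<in> {0..1} \<and> a t i \<in> {0..1} \<and> d t i \<in> {0..1}
                \<and> s t i + a t i + d t i = 1)
         \<and> (\<forall>t i. x t i \<in> {0..1})"
proof -
  have invariant: "\<forall>i. 0 \<le> s t i \<and> 0 \<le> a t i \<and> 0 \<le> d t i \<and> s t i + a t i + d t i = 1
                      \<and> x t i \<in> {0..1}" for t
  proof (induction t)
    case 0
    then show ?case using init_sad init_sum init_x by auto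
  next
    case (Suc t)
    have a01: "a t j \<in> {0..1}" and x01: "x t j \<in> {0..1}" for j
      using Suc.IH[rule_format, of j] by auto
    have avg_a: "(\<Sum>j\<in>UNIV. W i j * a t j) \<in> {0..1}" for i
      using row_stochastic_average_bounds[OF W_stoch a01] .
    have avg_x: "(\<Sum>j\<in>UNIV. Wt i j * x t j) \<in> {0..1}" for i
      using row_stochastic_average_bounds[OF Wt_stoch x01] .
    show ?case
    proof
      fix i
      have "0 \<le> s (Suc t) i" "0 \<le> a (Suc t) i" "0 \<le> d (Suc t) i"
        unfolding s_step a_step d_step
        using adoption_step_nonneg params01[of i] avg_a[of i] Suc.IH by auto
      moreover have "s (Suc t) i + a (Suc t) i + d (Suc t) i = s t i + a t i + d t i"
        unfolding s_step a_step d_step by (simp add: algebra_simps)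
      moreover have "x (Suc t) i \<in> {0..1}"
        unfolding x_step
        using convex_combination3_bounds weights[of i] init_x[of i] avg_x[of i] avg_a[of i]
        by blast
      ultimately show "0 \<le> s (Suc t) i \<and> 0 \<le> a (Suc t) i \<and> 0 \<le> d (Suc t) i
          \<and> s (Suc t) i + a (Suc t) i + d (Suc t) i = 1 \<and> x (Suc t) i \<in> {0..1}"
        using Suc.IH by auto
    qed
  qed
  then show ?thesis by fastforce
qed

end
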